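(* Consider the faulty-starter delivery problem described in the context, with finisher starting position $P=(x,y)$, $y\ge 0$. There exists an online algorithm with optimal (i.e. minimum possible) competitive ratio in which the finisher moves from its initial position $P$ along a straight line directly to some point $M=(m,0)$ of the segment $\overline{ST}$, and from then on it remains within the segment $\overline{ST}$.
   Context: Setting. In the plane let $S=(0,0)$ and $T=(1,0)$. A "starter" drone carrying a package starts at $S$ at time $0$ and moves at unit speed along the segment $\overline{ST}$ towards $T$. At an unknown time $t\in[0,1]$ it fails and stays forever at $(t,0)$ with the package (so at time $s$ the package is at $(\min\{s,t\},0)$). A "finisher" drone starts at time $0$ at $P=(x,y)$ with $y\ge 0$; it moves at speed (at most) $1$ and can start, stop and change direction instantaneously. The package can be handed over only when the two drones are co-located; the package is delivered at the first time the finisher, carrying the package, is at $T$. An online algorithm $\mathcal{A}$ specifies the finisher's trajectory using only $(x,y)$ (not $t$); $A(t)$ denotes its delivery time when the fail time is $t$. The optimal offline delivery time (fail time known in advance) is $\mathrm{Opt}(t)=\max\{1,\sqrt{(x-t)^2+y^2}+1-t\}$. The competitive ratio for fail time $t$ is $\mathrm{CR}_{\mathcal{A}}(t)=A(t)/\mathrm{Opt}(t)$, and the competitive ratio of $\mathcal{A}$ is $\mathrm{CR}_{\mathcal{A}}=\sup_{0\le t\le 1}\mathrm{CR}_{\mathcal{A}}(t)$. *)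

theory Defs
  imports "HOL-Analysis.Analysis"
begin

text \<open>Points of the plane are pairs of reals; dist on real \<times> real is Euclidean.
  An online algorithm is the finisher's trajectory (before pickup), a function of time
  depending only on the start point P = (x,y).\<close>

definition online_alg :: "real \<Rightarrow> real \<Rightarrow> (real \<Rightarrow> real \<times> real) \<Rightarrow> bool" where
  "online_alg x y f \<longleftrightarrow> f 0 = (x, y) \<and>
     (\<forall>s\<ge>0. \<forall>s'\<ge>0. dist (f s) (f s') \<le> \<bar>s - s'\<bar>)"

text \<open>Package position at time s when the starter fails at time t.\<close>
definition pkg :: "real \<Rightarrow> real \<Rightarrow> real \<times> real" where
  "pkg t s = (min s t, 0)"

text \<open>Delivery time: after a handover at time s (finisher co-located with the package),
  the finisher carries the package straight to T = (1,0). The earliest such delivery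
  (infinite if the finisher never meets the package).\<close>
definition deliv :: "(real \<Rightarrow> real \<times> real) \<Rightarrow> real \<Rightarrow> ereal" where
  "deliv f t = (INF s\<in>{s. s \<ge> 0 \<and> f s = pkg t s}. ereal (s + dist (f s) (1, 0)))"

definition opt :: "real \<Rightarrow> real \<Rightarrow> real \<Rightarrow> real" where
  "opt x y t = max 1 (sqrt ((x - t)\<^sup>2 + y\<^sup>2) + 1 - t)"

definition CR :: "real \<Rightarrow> real \<Rightarrow> (real \<Rightarrow> real \<times> real) \<Rightarrow> ereal" where
  "CR x y f = (SUP t\<in>{0..1}. deliv f t / ereal (opt x y t))"

end

theory Submission
  imports Defs "HOL-Complex_Analysis.Great_Picard"
begin

text \<open>An optimal online algorithm exists: online algorithms are 1-Lipschitz paths starting at P,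
  so by Arzela-Ascoli a sequence of algorithms whose ratios tend to the infimum has a subsequence
  converging on a compact time interval, and the meetings with the package, together with their
  delivery costs, pass to the limit.
  For any online algorithm G, let \<tau> be the first time G touches ST and M = G \<tau>. Since
  |PM| \<le> \<tau>, a finisher running straight to M and then following the projection of G onto ST
  meets the package whenever G does, at the same time and place; hence its ratio is no larger.
  Applying this to an optimal G gives the theorem.\<close>

section \<open>Lipschitz paths\<close>

lemma online_alg_iff_lipschitz:
  "online_alg x y f \<longleftrightarrow> f 0 = (x, y) \<and> 1-lipschitz_on {0..} f"
  by (auto simp: online_alg_def lipschitz_on_def dist_real_def)

lemma lipschitz_on_atLeast_iff:
  fixes f :: "real \<Rightarrow> 'a::metric_space"
  shows "L-lipschitz_on {a..} f \<longleftrightarrow> (\<forall>c. L-lipschitz_on {a..c} f)"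
proof
  assume "\<forall>c. L-lipschitz_on {a..c} f"
  then show "L-lipschitz_on {a..} f"
    unfolding lipschitz_on_def
    by (metis atLeastAtMost_iff atLeast_iff max.cobounded1 max.cobounded2)
qed (auto intro: lipschitz_on_subset)

lemma lipschitz_on_max_const: "1-lipschitz_on U (\<lambda>s::real. max s c)"
  by (rule lipschitz_onI) (auto simp: dist_real_def max_def)

lemma lipschitz_on_clamp: "1-lipschitz_on U (\<lambda>s::real. max a (min s b))"
  by (rule lipschitz_onI) (auto simp: dist_real_def max_def min_def)

lemma dist_straight_line:
  fixes p q :: "'a::real_normed_vector"
  shows "dist (p + (s / dist p q) *\<^sub>R (q - p)) (p + (s' / dist p q) *\<^sub>R (q - p)) =
    \<bar>s - s'\<bar> * (norm (q - p) / dist p q)"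
proof -
  have "(p + (s / dist p q) *\<^sub>R (q - p)) - (p + (s' / dist p q) *\<^sub>R (q - p)) =
      ((s - s') / dist p q) *\<^sub>R (q - p)"
    by (simp add: diff_divide_distrib scaleR_diff_left)
  then show ?thesis by (simp add: dist_norm)
qed

lemma lipschitz_on_straight_line:
  fixes p q :: "'a::real_normed_vector"
  shows "1-lipschitz_on {0..dist p q} (\<lambda>s. p + (s / dist p q) *\<^sub>R (q - p))"
proof (cases "p = q")
  case False
  then have "norm (q - p) / dist p q = 1" by (simp add: dist_norm norm_minus_commute)
  show ?thesis
  proof (rule lipschitz_onI)
    fix s s' :: real
    show "dist (p + (s / dist p q) *\<^sub>R (q - p)) (p + (s' / dist p q) *\<^sub>R (q - p))
      \<le> 1 * dist s s'"
      unfolding dist_straight_line \<open>norm (q - p) / dist p q = 1\<close> by (simp add: dist_real_def)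
  qed simp
qed simp

lemma straight_line_end:
  fixes p q :: "'a::real_normed_vector"
  shows "p + (dist p q / dist p q) *\<^sub>R (q - p) = q"
  by (cases "p = q") auto

lemma first_hitting_time:
  fixes G :: "real \<Rightarrow> 'a::topological_space"
  assumes "continuous_on {0..} G" "closed S" "0 \<le> s\<^sub>0" "G s\<^sub>0 \<in> S"
  obtains \<tau> where "0 \<le> \<tau>" "G \<tau> \<in> S" "\<And>s. 0 \<le> s \<Longrightarrow> G s \<in> S \<Longrightarrow> \<tau> \<le> s"
proof -
  define Z where "Z = {0..} \<inter> G -` S"
  have "closed Z"
    unfolding Z_def using assms(1,2) by (intro continuous_closed_preimage) auto
  moreover have "Z \<noteq> {}" "bdd_below Z"
    using assms(3,4) by (auto simp: Z_def bdd_below_def)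
  ultimately have "Inf Z \<in> Z" by (rule closed_contains_Inf[rotated 2])
  moreover have "Inf Z \<le> s" if "0 \<le> s" "G s \<in> S" for s
    using that \<open>bdd_below Z\<close> by (intro cInf_lower) (auto simp: Z_def)
  ultimately show ?thesis using that by (auto simp: Z_def)
qed

section \<open>Competitive ratios\<close>

lemma opt_pos: "0 < opt x y t"
  by (simp add: opt_def less_max_iff_disj)

lemma opt_le: "t \<in> {0..1} \<Longrightarrow> opt x y t \<le> \<bar>x\<bar> + \<bar>y\<bar> + 2"
proof -
  assume t: "t \<in> {0..1}"
  have "sqrt ((x - t)\<^sup>2 + y\<^sup>2) \<le> \<bar>x - t\<bar> + \<bar>y\<bar>"
    by (rule real_sqrt_le_iff[THEN iffD2, of _ "(\<bar>x - t\<bar> + \<bar>y\<bar>)\<^sup>2", simplified])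
       (simp add: power2_eq_square algebra_simps)
  then show ?thesis using t by (simp add: opt_def) linarith
qed

lemma CR_nonneg: "0 \<le> CR x y f"
proof -
  have "0 \<le> deliv f 0" unfolding deliv_def by (rule INF_greatest) simp
  then have "0 \<le> deliv f 0 / ereal (opt x y 0)"
    using opt_pos[of x y 0] by (simp add: ereal_le_divide_pos)
  also have "\<dots> \<le> CR x y f" unfolding CR_def by (rule SUP_upper) simp
  finally show ?thesis .
qed

lemma CR_le_if_cheap_meetings:
  assumes "\<And>t. t \<in> {0..1} \<Longrightarrow> \<exists>s\<ge>0. f s = pkg t s \<and> s + dist (f s) (1, 0) \<le> C * opt x y t"
  shows "CR x y f \<le> ereal C"
  unfolding CR_def
proof (rule SUP_least)
  fix t :: real assume "t \<in> {0..1}"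
  then obtain s where s: "s \<ge> 0" "f s = pkg t s" "s + dist (f s) (1, 0) \<le> C * opt x y t"
    using assms by blast
  have "deliv f t \<le> ereal (s + dist (f s) (1, 0))"
    unfolding deliv_def by (rule INF_lower) (use s in auto)
  also have "\<dots> \<le> ereal (opt x y t) * ereal C" using s by (simp add: mult.commute)
  finally show "deliv f t / ereal (opt x y t) \<le> ereal C"
    by (simp add: ereal_divide_le_pos opt_pos)
qed

lemma meeting_if_CR_less:
  assumes "CR x y f < ereal C" "t \<in> {0..1}"
  shows "\<exists>s\<ge>0. f s = pkg t s \<and> s + dist (f s) (1, 0) < C * opt x y t"
proof -
  have "deliv f t / ereal (opt x y t) < ereal C"
    using assms unfolding CR_def by (meson SUP_upper le_less_trans)
  then have "deliv f t < ereal (C * opt x y t)"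
    by (simp add: ereal_divide_less_pos opt_pos mult.commute)
  then show ?thesis
    unfolding deliv_def INF_less_iff by auto
qed

lemma CR_le_if_meetings_kept:
  assumes "\<And>t s. t \<in> {0..1} \<Longrightarrow> 0 \<le> s \<Longrightarrow> g s = pkg t s \<Longrightarrow> f s = g s"
  shows "CR x y f \<le> CR x y g"
  unfolding CR_def
proof (rule SUP_subset_mono[OF order_refl])
  fix t :: real assume t: "t \<in> {0..1}"
  have "deliv f t \<le> deliv g t"
    unfolding deliv_def by (rule INF_superset_mono) (use assms[OF t] in auto)
  then show "deliv f t / ereal (opt x y t) \<le> deliv g t / ereal (opt x y t)"
    by (simp add: opt_pos)
qed

section \<open>Heading straight for the segment ST\<close>

definition segment_ST :: "(real \<times> real) set" where
  "segment_ST = {0..1} \<times> {0}"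

lemma
  shows convex_segment_ST: "convex segment_ST"
    and closed_segment_ST: "closed segment_ST"
    and segment_ST_nonempty: "segment_ST \<noteq> {}"
  by (auto simp: segment_ST_def intro: convex_Times closed_Times)

lemma pkg_in_segment_ST: "t \<in> {0..1} \<Longrightarrow> 0 \<le> s \<Longrightarrow> pkg t s \<in> segment_ST"
  by (auto simp: pkg_def segment_ST_def)

lemma lipschitz_on_closest_point_segment_ST: "1-lipschitz_on U (closest_point segment_ST)"
  by (rule lipschitz_onI)
    (simp_all add: closest_point_lipschitz convex_segment_ST closed_segment_ST segment_ST_nonempty)

text \<open>If P = M, then d = 0 and s / d = 0, so the first branch is the constant P.\<close>
definition head_to_segment ::
    "real \<Rightarrow> real \<Rightarrow> real \<Rightarrow> (real \<Rightarrow> real \<times> real) \<Rightarrow> real \<Rightarrow> real \<times> real" where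
  "head_to_segment x y m H s = (let d = dist (x, y) (m, 0) in
     if s \<le> d then (x, y) + (s / d) *\<^sub>R ((m, 0) - (x, y)) else closest_point segment_ST (H s))"

lemma head_to_segment_arrival: "head_to_segment x y m H (dist (x, y) (m, 0)) = (m, 0)"
  unfolding head_to_segment_def Let_def if_P[OF order_refl] by (rule straight_line_end)

lemma online_alg_head_to_segment:
  assumes M: "(m, 0) \<in> segment_ST"
    and H: "1-lipschitz_on {dist (x, y) (m, 0)..} H" "H (dist (x, y) (m, 0)) = (m, 0)"
  shows "online_alg x y (head_to_segment x y m H)"
  unfolding online_alg_iff_lipschitz lipschitz_on_atLeast_iff
proof (intro conjI allI)
  show "head_to_segment x y m H 0 = (x, y)" by (simp add: head_to_segment_def)
  fix c :: real
  define d where "d = dist (x, y) (m, 0)"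
  have "1-lipschitz_on {d..max c d} (\<lambda>s. closest_point segment_ST (H s))"
    using lipschitz_on_compose2[OF lipschitz_on_subset[OF H(1)] lipschitz_on_closest_point_segment_ST]
    by (simp add: d_def subset_eq)
  moreover have "(x, y) + (d / d) *\<^sub>R ((m, 0) - (x, y)) = closest_point segment_ST (H d)"
    using straight_line_end[of "(x, y)" "(m, 0)"] H(2) M by (simp add: d_def closest_point_self)
  ultimately have "1-lipschitz_on {0..max c d} (head_to_segment x y m H)"
    using lipschitz_on_concat[OF lipschitz_on_straight_line[of "(x, y)" "(m, 0)"]]
    by (simp add: head_to_segment_def d_def Let_def)
  then show "1-lipschitz_on {0..c} (head_to_segment x y m H)"
    by (rule lipschitz_on_subset) auto
qed

lemma head_to_segment_in_segment_ST:
  assumes "(m, 0) \<in> segment_ST" "dist (x, y) (m, 0) \<le> s"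
  shows "head_to_segment x y m H s \<in> segment_ST"
  using assms head_to_segment_arrival[of x y m H]
  by (cases "s = dist (x, y) (m, 0)")
    (auto simp: head_to_segment_def closest_point_in_set closed_segment_ST segment_ST_nonempty)

lemma head_to_segment_agreeing_on_segment_ST:
  assumes G: "online_alg x y G"
  obtains m H where "(m, 0) \<in> segment_ST" "1-lipschitz_on {dist (x, y) (m, 0)..} H"
    "H (dist (x, y) (m, 0)) = (m, 0)"
    "\<And>s. 0 \<le> s \<Longrightarrow> G s \<in> segment_ST \<Longrightarrow> head_to_segment x y m H s = G s"
proof (cases "\<exists>s\<ge>0. G s \<in> segment_ST")
  case False
  show ?thesis
    by (rule that[of 0 "\<lambda>_. (0, 0)"])
      (use False in \<open>auto simp: segment_ST_def intro: lipschitz_on_le[OF lipschitz_on_constant]\<close>)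
next
  case True
  have G0: "G 0 = (x, y)" and Glip: "1-lipschitz_on {0..} G"
    using G by (auto simp: online_alg_iff_lipschitz)
  obtain \<tau> where "0 \<le> \<tau>" "G \<tau> \<in> segment_ST"
    and first: "\<And>s. 0 \<le> s \<Longrightarrow> G s \<in> segment_ST \<Longrightarrow> \<tau> \<le> s"
    using first_hitting_time[OF lipschitz_on_continuous_on[OF Glip] closed_segment_ST] True by blast
  define m where "m = fst (G \<tau>)"
  have G\<tau>: "G \<tau> = (m, 0)" and M: "(m, 0) \<in> segment_ST"
    using \<open>G \<tau> \<in> segment_ST\<close> by (auto simp: m_def segment_ST_def prod_eq_iff)
  define d where "d = dist (x, y) (m, 0)"
  have "d \<le> \<tau>"
    using lipschitz_onD[OF Glip, of 0 \<tau>] \<open>0 \<le> \<tau>\<close> G\<tau> G0 by (simp add: d_def dist_real_def)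
  define H where "H s = G (max s \<tau>)" for s
  show ?thesis
  proof (rule that[of m H, folded d_def])
    have "(\<lambda>s. max s \<tau>) ` {d..} \<subseteq> {0..}" using \<open>0 \<le> \<tau>\<close> by auto
    then show "1-lipschitz_on {d..} H"
      using lipschitz_on_compose2[OF lipschitz_on_max_const lipschitz_on_subset[OF Glip]]
      by (simp add: H_def)
    show "H d = (m, 0)" using \<open>d \<le> \<tau>\<close> G\<tau> by (simp add: H_def max_def)
    fix s assume s: "0 \<le> s" "G s \<in> segment_ST"
    show "head_to_segment x y m H s = G s"
    proof (cases "s \<le> d")
      case True
      then have "s = d" "\<tau> = d" using first[OF s] \<open>d \<le> \<tau>\<close> by auto
      then show ?thesis using head_to_segment_arrival[of x y m H] G\<tau> by (simp add: d_def)
    next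
      case False
      then show ?thesis using first[OF s] s(2)
        by (simp add: head_to_segment_def d_def H_def closest_point_self max_def)
    qed
  qed (rule M)
qed

lemma head_to_segment_CR_le:
  assumes G: "online_alg x y G"
  obtains m H where "(m, 0) \<in> segment_ST" "online_alg x y (head_to_segment x y m H)"
    "CR x y (head_to_segment x y m H) \<le> CR x y G"
proof -
  obtain m H where M: "(m, 0) \<in> segment_ST" and H: "1-lipschitz_on {dist (x, y) (m, 0)..} H"
      "H (dist (x, y) (m, 0)) = (m, 0)"
    and agree: "\<And>s. 0 \<le> s \<Longrightarrow> G s \<in> segment_ST \<Longrightarrow> head_to_segment x y m H s = G s"
    using head_to_segment_agreeing_on_segment_ST[OF G] by metis
  have "CR x y (head_to_segment x y m H) \<le> CR x y G"
  proof (rule CR_le_if_meetings_kept)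
    fix t s assume "t \<in> {0..1}" "0 \<le> s" "G s = pkg t s"
    then show "head_to_segment x y m H s = G s" using agree pkg_in_segment_ST by simp
  qed
  then show ?thesis using that M online_alg_head_to_segment[OF M H] by blast
qed

section \<open>Existence of an optimal algorithm\<close>

lemma tendsto_lipschitz_family:
  fixes fs :: "nat \<Rightarrow> 'a::metric_space \<Rightarrow> 'b::metric_space"
  assumes lip: "\<And>n. L-lipschitz_on U (fs n)" and "\<And>n. s n \<in> U" "l \<in> U"
    and "s \<longlonglongrightarrow> l" "(\<lambda>n. fs n l) \<longlonglongrightarrow> g"
  shows "(\<lambda>n. fs n (s n)) \<longlonglongrightarrow> g"
proof -
  have "(\<lambda>n. dist (s n) l) \<longlonglongrightarrow> 0" "(\<lambda>n. dist (fs n l) g) \<longlonglongrightarrow> 0"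
    using assms(4,5) by (simp_all only: tendsto_dist_iff[symmetric])
  then have bound0: "(\<lambda>n. L * dist (s n) l + dist (fs n l) g) \<longlonglongrightarrow> 0"
    using tendsto_add[OF tendsto_mult_right_zero] by fastforce
  have bound: "norm (dist (fs n (s n)) g) \<le> L * dist (s n) l + dist (fs n l) g" for n
  proof -
    have "dist (fs n (s n)) (fs n l) \<le> L * dist (s n) l"
      using assms(2,3) by (rule lipschitz_onD[OF lip])
    then show ?thesis
      using dist_triangle[of "fs n (s n)" g "fs n l"] by simp
  qed
  have "(\<lambda>n. dist (fs n (s n)) g) \<longlonglongrightarrow> 0"
    by (rule Lim_null_comparison[OF always_eventually[OF allI[OF bound]] bound0])
  then show ?thesis
    by (simp only: tendsto_dist_iff[of "\<lambda>n. fs n (s n)"])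
qed

lemma online_alg_clamp:
  assumes "g 0 = (x, y)" "1-lipschitz_on {0..B} g" "0 \<le> B"
  shows "online_alg x y (\<lambda>s. g (max 0 (min s B)))"
  unfolding online_alg_iff_lipschitz
proof
  show "g (max 0 (min 0 B)) = (x, y)" using assms by simp
  have "(\<lambda>s. max 0 (min s B)) ` {0..} \<subseteq> {0..B}" using \<open>0 \<le> B\<close> by auto
  then show "1-lipschitz_on {0..} (\<lambda>s. g (max 0 (min s B)))"
    using lipschitz_on_compose2[OF lipschitz_on_clamp lipschitz_on_subset[OF assms(2)]] by simp
qed

lemma online_alg_convergent_subseq:
  assumes algs: "\<And>n. online_alg x y (gs n)" and "0 \<le> B"
  obtains g k where "online_alg x y g" "strict_mono (k :: nat \<Rightarrow> nat)"
    "\<And>s. s \<in> {0..B} \<Longrightarrow> (\<lambda>n. gs (k n) s) \<longlonglongrightarrow> g s"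
proof -
  have gs0: "gs n 0 = (x, y)" and gslip: "1-lipschitz_on {0..} (gs n)" for n
    using algs by (auto simp: online_alg_iff_lipschitz)
  have gsD: "dist (gs n a) (gs n b) \<le> dist a b" if "0 \<le> a" "0 \<le> b" for n a b
    using lipschitz_onD[OF gslip, of a b n] that by simp
  obtain g0 k where "strict_mono (k :: nat \<Rightarrow> nat)"
    and unif: "\<And>e. 0 < e \<Longrightarrow>
      \<exists>N. \<forall>n s. n \<ge> N \<and> s \<in> {0..B} \<longrightarrow> norm (gs (k n) s - g0 s) < e"
  proof (rule Arzela_Ascoli[of "{0..B}" gs "norm (x, y) + B"])
    fix n s assume "s \<in> {0..B}"
    then show "norm (gs n s) \<le> norm (x, y) + B"
      using gsD[of s 0 n] gs0[of n] norm_triangle_ineq2[of "gs n s" "gs n 0"]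
      by (simp add: dist_norm dist_real_def)
  next
    fix s e :: real assume "s \<in> {0..B}" "0 < e"
    then show "\<exists>d>0. \<forall>n s'. s' \<in> {0..B} \<and> norm (s - s') < d \<longrightarrow>
        norm (gs n s - gs n s') < e"
      using gsD[of s _] by (intro exI[of _ e]) (auto simp: dist_norm intro: le_less_trans)
  qed auto
  have conv: "(\<lambda>n. gs (k n) s) \<longlonglongrightarrow> g0 s" if "s \<in> {0..B}" for s
    using unif that by (intro LIMSEQ_I) metis
  have "g0 0 = (x, y)"
    using conv[of 0] \<open>0 \<le> B\<close> by (simp add: gs0 LIMSEQ_const_iff)
  have g0lip: "1-lipschitz_on {0..B} g0"
  proof (rule lipschitz_onI)
    fix a b assume "a \<in> {0..B}" "b \<in> {0..B}"
    then show "dist (g0 a) (g0 b) \<le> 1 * dist a b"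
      using gsD by (intro LIMSEQ_le_const2[OF tendsto_dist[OF conv conv]]) auto
  qed simp
  define g where "g s = g0 (max 0 (min s B))" for s
  have "online_alg x y g"
    unfolding g_def using \<open>g0 0 = (x, y)\<close> g0lip \<open>0 \<le> B\<close> by (rule online_alg_clamp)
  moreover have "(\<lambda>n. gs (k n) s) \<longlonglongrightarrow> g s" if "s \<in> {0..B}" for s
    using conv[OF that] that by (simp add: g_def)
  ultimately show ?thesis using that \<open>strict_mono k\<close> by blast
qed

lemma meeting_limit:
  assumes lip: "\<And>n. 1-lipschitz_on {0..} (fs n)"
    and conv: "\<And>s. s \<in> {0..B} \<Longrightarrow> (\<lambda>n. fs n s) \<longlonglongrightarrow> g s"
    and meet: "\<And>n. s n \<in> {0..B}" "\<And>n. fs n (s n) = pkg t (s n)"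
      "\<And>n. s n + dist (fs n (s n)) (1, 0) \<le> b n"
    and "b \<longlonglongrightarrow> \<beta>"
  shows "\<exists>s\<ge>0. g s = pkg t s \<and> s + dist (g s) (1, 0) \<le> \<beta>"
proof -
  have "seq_compact {0..B}" by (simp add: compact_imp_seq_compact)
  then obtain l r
    where l: "l \<in> {0..B}" and r: "strict_mono r" and lim: "(s \<circ> r) \<longlonglongrightarrow> l"
    using meet(1) by (metis seq_compactE)
  have "(\<lambda>n. fs (r n) (s (r n))) \<longlonglongrightarrow> g l"
  proof (rule tendsto_lipschitz_family[OF lip])
    show "(\<lambda>n. fs (r n) l) \<longlonglongrightarrow> g l"
      using LIMSEQ_subseq_LIMSEQ[OF conv[OF l] r] by (simp add: o_def)
  qed (use l lim meet(1) in \<open>auto simp: o_def\<close>)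
  moreover have "(\<lambda>n. fs (r n) (s (r n))) \<longlonglongrightarrow> pkg t l"
    unfolding meet(2) pkg_def using lim by (intro tendsto_intros) (simp add: o_def)
  ultimately have "g l = pkg t l" by (rule LIMSEQ_unique)
  have "l + dist (g l) (1, 0) \<le> \<beta>"
  proof (rule LIMSEQ_le)
    show "(\<lambda>n. s (r n) + dist (fs (r n) (s (r n))) (1, 0)) \<longlonglongrightarrow> l + dist (g l) (1, 0)"
      using lim \<open>(\<lambda>n. fs (r n) (s (r n))) \<longlonglongrightarrow> g l\<close>
      by (intro tendsto_intros) (simp add: o_def)
    show "(\<lambda>n. b (r n)) \<longlonglongrightarrow> \<beta>"
      using LIMSEQ_subseq_LIMSEQ[OF \<open>b \<longlonglongrightarrow> \<beta>\<close> r] by (simp add: o_def)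
  qed (use meet(3) in auto)
  then show ?thesis using l \<open>g l = pkg t l\<close> by auto
qed

lemma online_alg_CR_le_of_approximations:
  assumes algs: "\<And>n. online_alg x y (gs n)"
    and CR: "\<And>n. CR x y (gs n) < ereal (c + inverse (Suc n))"
  shows "\<exists>g. online_alg x y g \<and> CR x y g \<le> ereal c"
proof -
  \<comment> \<open>Every meeting used below costs less than (|c| + 1) opt \<le> B, so it happens in {0..B}.\<close>
  define B where "B = (\<bar>c\<bar> + 1) * (\<bar>x\<bar> + \<bar>y\<bar> + 2)"
  have "0 \<le> B" by (simp add: B_def)
  obtain g k where g: "online_alg x y g" and k: "strict_mono k"
    and conv: "\<And>s. s \<in> {0..B} \<Longrightarrow> (\<lambda>n. gs (k n) s) \<longlonglongrightarrow> g s"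
    using online_alg_convergent_subseq[of x y gs B] algs \<open>0 \<le> B\<close> by metis
  have "CR x y g \<le> ereal c"
  proof (rule CR_le_if_cheap_meetings)
    fix t :: real assume t: "t \<in> {0..1}"
    define b where "b n = (c + inverse (Suc (k n))) * opt x y t" for n
    have "\<forall>n. \<exists>s\<ge>0. gs (k n) s = pkg t s \<and> s + dist (gs (k n) s) (1, 0) < b n"
      unfolding b_def using meeting_if_CR_less[OF CR t] by blast
    then obtain sq where sq: "\<And>n. 0 \<le> sq n" "\<And>n. gs (k n) (sq n) = pkg t (sq n)"
      "\<And>n. sq n + dist (gs (k n) (sq n)) (1, 0) < b n"
      by metis
    have "sq n \<le> B" for n
    proof -
      have "inverse (Suc (k n)) \<le> 1" by (simp add: field_simps)
      then have "c + inverse (Suc (k n)) \<le> \<bar>c\<bar> + 1" by linarith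
      then have "b n \<le> B"
        unfolding b_def B_def using opt_le[OF t] opt_pos[of x y t]
        by (intro mult_mono) auto
      then show ?thesis using sq(3)[of n] zero_le_dist[of "gs (k n) (sq n)" "(1, 0)"] by linarith
    qed
    moreover have "b \<longlonglongrightarrow> (c + 0) * opt x y t"
      using LIMSEQ_subseq_LIMSEQ[OF LIMSEQ_inverse_real_of_nat k] unfolding b_def
      by (intro tendsto_intros) (simp add: o_def)
    ultimately show "\<exists>s\<ge>0. g s = pkg t s \<and> s + dist (g s) (1, 0) \<le> c * opt x y t"
      using algs sq by (intro meeting_limit[of "\<lambda>n. gs (k n)" B g sq t b])
        (auto simp: online_alg_iff_lipschitz conv less_imp_le)
  qed
  then show ?thesis using g by blast
qed

lemma optimal_online_alg_exists:
  "\<exists>f. online_alg x y f \<and> (\<forall>g. online_alg x y g \<longrightarrow> CR x y f \<le> CR x y g)"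
proof (cases "\<exists>g. online_alg x y g \<and> CR x y g \<noteq> \<infinity>")
  case False
  have "online_alg x y (\<lambda>_. (x, y))"
    by (simp add: online_alg_iff_lipschitz lipschitz_on_le[OF lipschitz_on_constant])
  then show ?thesis using False by auto
next
  case True
  define c where "c = (INF g\<in>{g. online_alg x y g}. CR x y g)"
  obtain g0 where "online_alg x y g0" "CR x y g0 \<noteq> \<infinity>" using True by blast
  then have "c \<noteq> \<infinity>"
    unfolding c_def by (metis INF_lower mem_Collect_eq ereal_infty_less_eq(1))
  moreover have "0 \<le> c" unfolding c_def by (rule INF_greatest) (rule CR_nonneg)
  ultimately obtain c' where c': "c = ereal c'" by (cases c) auto
  have "\<exists>g. online_alg x y g \<and> CR x y g < ereal (c' + inverse (Suc n))" for n
  proof -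
    have "c < ereal (c' + inverse (Suc n))" using c' by simp
    then show ?thesis unfolding c_def INF_less_iff by auto
  qed
  then obtain gs where "\<And>n. online_alg x y (gs n)"
    "\<And>n. CR x y (gs n) < ereal (c' + inverse (Suc n))"
    by metis
  then obtain f where "online_alg x y f" "CR x y f \<le> c"
    using online_alg_CR_le_of_approximations c' by metis
  then show ?thesis unfolding c_def by (meson INF_lower mem_Collect_eq order_trans)
qed

theorem lemma1:
  fixes x y :: real
  assumes "y \<ge> 0"
  shows "\<exists>f. online_alg x y f \<and> (\<forall>g. online_alg x y g \<longrightarrow> CR x y f \<le> CR x y g) \<and>
    (\<exists>m. 0 \<le> m \<and> m \<le> 1 \<and>
       (let d = dist (x, y) (m, 0) in
          (\<forall>s. 0 \<le> s \<and> s \<le> d \<longrightarrow> f s = (x, y) + (s / d) *\<^sub>R ((m, 0) - (x, y))) \<and>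
          (\<forall>s\<ge>d. snd (f s) = 0 \<and> 0 \<le> fst (f s) \<and> fst (f s) \<le> 1)))"
proof -
  obtain G where G: "online_alg x y G" and opt: "\<And>g. online_alg x y g \<Longrightarrow> CR x y G \<le> CR x y g"
    using optimal_online_alg_exists by blast
  obtain m H where M: "(m, 0) \<in> segment_ST" and f: "online_alg x y (head_to_segment x y m H)"
    and CR: "CR x y (head_to_segment x y m H) \<le> CR x y G"
    using head_to_segment_CR_le[OF G] by metis
  define f where "f = head_to_segment x y m H"
  have "\<forall>g. online_alg x y g \<longrightarrow> CR x y f \<le> CR x y g"
    using CR opt order_trans unfolding f_def by blast
  moreover have "0 \<le> m \<and> m \<le> 1" using M by (simp add: segment_ST_def)
  moreover have "\<forall>s. 0 \<le> s \<and> s \<le> dist (x, y) (m, 0) \<longrightarrow>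
      f s = (x, y) + (s / dist (x, y) (m, 0)) *\<^sub>R ((m, 0) - (x, y))"
    by (simp add: f_def head_to_segment_def Let_def)
  moreover have "\<forall>s\<ge>dist (x, y) (m, 0). snd (f s) = 0 \<and> 0 \<le> fst (f s) \<and> fst (f s) \<le> 1"
    using head_to_segment_in_segment_ST[OF M] by (auto simp: f_def segment_ST_def mem_Times_iff)
  ultimately show ?thesis using f[folded f_def] unfolding Let_def by blast
qed

end
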